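(* Let $K:\mathbb{R}\to[0,\infty)$ be a mean continuous kernel which is variation diminishing on the line. Then its wrapped kernel $\widetilde K(e^{it})=\sum_{k\in\mathbb{Z}}K(t+2\pi k)$ is variation diminishing on the circle, i.e. $S_c(\widetilde K*f)\le S_c(f)$ for every $f\in L^1(\mathbb{S})$.
   Context: A function $K:\mathbb{R}\to[0,\infty)$ with $\int_{\mathbb{R}}K(t)\,dt=1$ is a mean continuous kernel if $2K(t)=\lim_{h\downarrow0}(K(t+h)+K(t-h))$ for all $t\in\mathbb{R}$. For reals, $S^-(x_1,\dots,x_n)$ counts the sign changes in the sequence ignoring zeros; for $g:\mathbb{R}\to\mathbb{R}$, $S^-(g)=\sup S^-(g(t_1),\dots,g(t_n))$ over all $n$ and $t_1<\dots<t_n$. $K$ is variation diminishing on the line (in the sense of Karlin) if $S^-(K*_{\mathbb{R}}g)\le S^-(g)$ for every $g$ for which the convolution $(K*_{\mathbb{R}}g)(y)=\int_{\mathbb{R}}K(y-x)g(x)\,dx$ exists. On $\mathbb{S}=\{z\in\mathbb{C}:|z|=1\}$ with $d\mu(z)=\frac{dt}{2\pi}$, $(g*f)(w)=\int_{\mathbb{S}}g(wz^{-1})f(z)\,d\mu(z)$. Cyclic sign changes: for a vector $\mathbf{x}\ne0$, $S_c(\mathbf{x})=S^-(x_j,\dots,x_n,x_1,\dots,x_{j-1},x_j)$ for any $x_j\ne0$, $S_c(0)=0$; points $z_l=e^{it_l}$ are in cyclic order if $t_1<\dots<t_n<t_1+2\pi$; for $f:\mathbb{S}\to\mathbb{R}$,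 $S_c(f)$ is the supremum of $S_c(f(z_1),\dots,f(z_n))$ over all points in cyclic order. *)

theory Defs
  imports "HOL-Analysis.Analysis"
begin

definition sign_changes :: "real list \<Rightarrow> nat" where
  "sign_changes xs = (let ys = filter (\<lambda>x. x \<noteq> 0) xs in
     card {i. Suc i < length ys \<and> ys ! i * ys ! Suc i < 0})"

definition sign_changes_fun :: "(real \<Rightarrow> real) \<Rightarrow> enat" where
  "sign_changes_fun g = (SUP ts \<in> {ts. sorted_wrt (<) ts}. enat (sign_changes (map g ts)))"

definition cyc_sign_changes :: "real list \<Rightarrow> nat" where
  "cyc_sign_changes xs = (if \<forall>x\<in>set xs. x = 0 then 0 else
     (let j = (LEAST j. j < length xs \<and> xs ! j \<noteq> 0) in
        sign_changes (drop j xs @ take j xs @ [xs ! j])))"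

definition cyc_sign_changes_fun :: "(complex \<Rightarrow> real) \<Rightarrow> enat" where
  "cyc_sign_changes_fun f = (SUP ts \<in> {ts. sorted_wrt (<) ts \<and> (ts \<noteq> [] \<longrightarrow> last ts < hd ts + 2 * pi)}.
       enat (cyc_sign_changes (map (\<lambda>t. f (cis t)) ts)))"

definition mean_continuous_kernel :: "(real \<Rightarrow> real) \<Rightarrow> bool" where
  "mean_continuous_kernel K \<longleftrightarrow> (\<forall>t. K t \<ge> 0) \<and> integrable lborel K \<and>
     (\<integral>t. K t \<partial>lborel) = 1 \<and>
     (\<forall>t. ((\<lambda>h. K (t + h) + K (t - h)) \<longlongrightarrow> 2 * K t) (at_right 0))"

definition line_conv :: "(real \<Rightarrow> real) \<Rightarrow> (real \<Rightarrow> real) \<Rightarrow> real \<Rightarrow> real" where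
  "line_conv K g y = (\<integral>x. K (y - x) * g x \<partial>lborel)"

definition line_conv_exists :: "(real \<Rightarrow> real) \<Rightarrow> (real \<Rightarrow> real) \<Rightarrow> bool" where
  "line_conv_exists K g \<longleftrightarrow> (\<forall>y. integrable lborel (\<lambda>x. K (y - x) * g x))"

definition variation_diminishing_line :: "(real \<Rightarrow> real) \<Rightarrow> bool" where
  "variation_diminishing_line K \<longleftrightarrow>
     (\<forall>g. line_conv_exists K g \<longrightarrow> sign_changes_fun (line_conv K g) \<le> sign_changes_fun g)"

definition wrapped_kernel :: "(real \<Rightarrow> real) \<Rightarrow> complex \<Rightarrow> real" where
  "wrapped_kernel K z = (\<Sum>\<^sub>\<infinity>k::int. K (Arg z + 2 * pi * of_int k))"

definition circ_conv :: "(complex \<Rightarrow> real) \<Rightarrow> (complex \<Rightarrow> real) \<Rightarrow> complex \<Rightarrow> real" where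
  "circ_conv g f w = (1 / (2 * pi)) * (LINT t:{0..2*pi}|lborel. g (w * inverse (cis t)) * f (cis t))"

definition L1_circle :: "(complex \<Rightarrow> real) \<Rightarrow> bool" where
  "L1_circle f \<longleftrightarrow> set_integrable lborel {0..2*pi} (\<lambda>t. f (cis t))"

end

theory Submission
  imports Defs "HOL-Library.Sublist" "HOL-Library.Real_Mod"
begin

text \<open>Let F be the circle convolution. Truncating f at height n and repeating it over the periods
  -n, ..., N + n - 1 of the line gives a function whose line convolution with K has, for large n,
  the sign of F at u + 2 pi j for 0 \<le> j < N and any finitely many u with F(e^iu) \<noteq> 0; this is dominated
  convergence, the periodization of K being integrable over a period. The truncated function has at
  most c + 1 sign changes per period, where c bounds the cyclic sign changes of f, so at most
  (N + 2n)(c + 1) in all. If F had c + 2 cyclic sign changes (both counts are even), repeating a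
  witnessing configuration N times would give about N(c + 2) sign changes of the line convolution,
  and the variation diminishing property fails for large N.\<close>

section \<open>Sign changes of finite sequences\<close>

fun adjacent_sign_changes :: "real list \<Rightarrow> nat" where
  "adjacent_sign_changes (x # y # zs) = (if x * y < 0 then 1 else 0) + adjacent_sign_changes (y # zs)"
| "adjacent_sign_changes _ = 0"

lemma card_adjacent_sign_changes:
  "card {i. Suc i < length ys \<and> ys ! i * ys ! Suc i < 0} = adjacent_sign_changes ys"
proof (induction ys rule: adjacent_sign_changes.induct)
  case (1 x y zs)
  let ?A = "{i. Suc i < length (y # zs) \<and> (y # zs) ! i * (y # zs) ! Suc i < 0}"
  have indices: "{i. Suc i < length (x # y # zs) \<and> (x # y # zs) ! i * (x # y # zs) ! Suc i < 0}
      = (if x * y < 0 then {0} else {}) \<union> Suc ` ?A"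
    apply (auto simp: image_iff split: if_splits)
    subgoal for i by (cases i) auto
    subgoal for i by (cases i) auto
    done
  have "finite ?A" by (rule finite_subset[of _ "{..<length (y # zs)}"]) auto
  with 1 show ?case by (simp only: indices) (auto simp: card_image)
qed auto

lemma sign_changes_eq_adjacent:
  "sign_changes xs = adjacent_sign_changes (filter (\<lambda>x. x \<noteq> 0) xs)"
  unfolding sign_changes_def Let_def card_adjacent_sign_changes ..

lemma adjacent_sign_changes_Cons_ge: "adjacent_sign_changes ys \<le> adjacent_sign_changes (y # ys)"
  by (cases ys) auto

lemma adjacent_sign_changes_skip:
  assumes "x \<noteq> 0" "y \<noteq> 0" "\<forall>z\<in>set ys. z \<noteq> 0"
  shows "adjacent_sign_changes (x # ys) \<le> (if x * y < 0 then 1 else 0) + adjacent_sign_changes (y # ys)"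
proof (cases ys)
  case (Cons z zs)
  with assms have "(if x * z < 0 then 1 else 0)
      \<le> (if x * y < 0 then 1 else 0) + (if y * z < 0 then 1 else 0::nat)"
    by (auto simp: mult_less_0_iff)
  with Cons show ?thesis by simp
qed simp

lemma adjacent_sign_changes_subseq_Cons:
  assumes "subseq xs ys" "\<forall>z\<in>set ys. z \<noteq> 0"
  shows "adjacent_sign_changes xs \<le> adjacent_sign_changes ys \<and>
    (\<forall>x. x \<noteq> 0 \<longrightarrow> adjacent_sign_changes (x # xs) \<le> adjacent_sign_changes (x # ys))"
  using assms
proof (induction rule: list_emb.induct)
  case (list_emb_Nil ys)
  then show ?case by (cases ys) auto
next
  case (list_emb_Cons xs ys y)
  then have IH: "adjacent_sign_changes xs \<le> adjacent_sign_changes ys"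
      "\<And>x. x \<noteq> 0 \<Longrightarrow> adjacent_sign_changes (x # xs) \<le> adjacent_sign_changes (x # ys)"
    by auto
  have "adjacent_sign_changes xs \<le> adjacent_sign_changes (y # ys)"
    using IH(1) adjacent_sign_changes_Cons_ge order_trans by blast
  moreover have "adjacent_sign_changes (x # xs) \<le> adjacent_sign_changes (x # y # ys)" if "x \<noteq> 0" for x
    using IH(2)[OF that] adjacent_sign_changes_skip[of x y ys] list_emb_Cons.prems that by auto
  ultimately show ?case by auto
next
  case (list_emb_Cons2 x y xs ys)
  then have IH: "adjacent_sign_changes xs \<le> adjacent_sign_changes ys"
      "\<And>x. x \<noteq> 0 \<Longrightarrow> adjacent_sign_changes (x # xs) \<le> adjacent_sign_changes (x # ys)"
    and "x = y" "y \<noteq> 0"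
    by auto
  then show ?case using IH(2)[of y] by auto
qed

lemma adjacent_sign_changes_subseq:
  "subseq xs ys \<Longrightarrow> \<forall>z\<in>set ys. z \<noteq> 0 \<Longrightarrow> adjacent_sign_changes xs \<le> adjacent_sign_changes ys"
  using adjacent_sign_changes_subseq_Cons by blast

lemma sign_changes_mask:
  "sign_changes (map (\<lambda>t. if P t then g t else 0) ts) \<le> sign_changes (map g ts)"
proof -
  have "subseq (filter (\<lambda>x. x \<noteq> 0) (map (\<lambda>t. if P t then g t else 0) ts))
      (filter (\<lambda>x. x \<noteq> 0) (map g ts))"
    by (induction ts) auto
  then show ?thesis
    unfolding sign_changes_eq_adjacent by (rule adjacent_sign_changes_subseq) auto
qed

lemma sign_changes_filter_support:
  assumes "\<forall>x\<in>set ts. \<not> Q x \<longrightarrow> g x = 0"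
  shows "sign_changes (map g (filter Q ts)) = sign_changes (map g ts)"
proof -
  have "filter (\<lambda>x. x \<noteq> 0) (map g (filter Q ts)) = filter (\<lambda>x. x \<noteq> 0) (map g ts)"
    using assms by (induction ts) auto
  then show ?thesis unfolding sign_changes_eq_adjacent by simp
qed

lemma adjacent_sign_changes_append:
  "xs \<noteq> [] \<Longrightarrow> ys \<noteq> [] \<Longrightarrow> adjacent_sign_changes (xs @ ys)
    = adjacent_sign_changes xs + adjacent_sign_changes ys + (if last xs * hd ys < 0 then 1 else 0)"
proof (induction xs rule: adjacent_sign_changes.induct)
  case ("2_2" v)
  then show ?case by (cases ys) auto
qed auto

lemma sign_changes_append_le: "sign_changes (xs @ ys) \<le> sign_changes xs + sign_changes ys + 1"
  unfolding sign_changes_eq_adjacent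
  by (cases "filter (\<lambda>x. x \<noteq> 0) xs = []"; cases "filter (\<lambda>x. x \<noteq> 0) ys = []")
    (auto simp: adjacent_sign_changes_append)

lemma even_adjacent_sign_changes_iff:
  "xs \<noteq> [] \<Longrightarrow> \<forall>z\<in>set xs. z \<noteq> 0 \<Longrightarrow> even (adjacent_sign_changes xs) \<longleftrightarrow> hd xs * last xs > 0"
proof (induction xs rule: adjacent_sign_changes.induct)
  case (1 x y zs)
  then have "even (adjacent_sign_changes (y # zs)) \<longleftrightarrow> y * last (y # zs) > 0"
    and "x \<noteq> 0" "y \<noteq> 0" "last (y # zs) \<noteq> 0"
    by auto
  then show ?case by (auto simp: mult_less_0_iff zero_less_mult_iff)
next
  case ("2_2" v)
  then show ?case by (auto simp: zero_less_mult_iff)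
qed auto

lemma adjacent_sign_changes_same_signs:
  "list_all2 (\<lambda>a b. a * b > 0) xs ys \<Longrightarrow> adjacent_sign_changes xs = adjacent_sign_changes ys"
proof (induction xs arbitrary: ys rule: adjacent_sign_changes.induct)
  case (1 x y zs)
  then obtain a b ws where ys: "ys = a # b # ws" and ab: "x * a > 0" "y * b > 0"
    and rest: "list_all2 (\<lambda>a b. a * b > 0) (y # zs) (b # ws)"
    by (auto simp: list_all2_Cons1)
  have "(x * y < 0) = (a * b < 0)" using ab by (auto simp: zero_less_mult_iff mult_less_0_iff)
  then show ?case using "1.IH"[OF rest] ys by simp
qed (auto simp: list_all2_Cons1)

lemma adjacent_sign_changes_concat_replicate:
  assumes "zs \<noteq> []"
  defines "b \<equiv> if last zs * hd zs < 0 then 1 else 0"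
  shows "adjacent_sign_changes (concat (replicate (Suc N) zs)) + b
    = Suc N * (adjacent_sign_changes zs + b)"
proof (induction N)
  case (Suc N)
  let ?R = "concat (replicate (Suc N) zs)"
  have unfold: "concat (replicate (Suc (Suc N)) zs) = ?R @ zs"
    by (induction N) auto
  have "last ?R = last zs" "?R \<noteq> []"
    using assms(1) by (induction N) auto
  then have "adjacent_sign_changes (?R @ zs) = adjacent_sign_changes ?R + adjacent_sign_changes zs + b"
    using adjacent_sign_changes_append[of ?R zs] assms by simp
  then show ?case unfolding unfold using Suc by simp
qed simp

lemma cyc_sign_changes_eq_adjacent:
  assumes "\<exists>x\<in>set xs. x \<noteq> 0"
  defines "zs \<equiv> filter (\<lambda>x. x \<noteq> 0) xs"
  shows "cyc_sign_changes xs = adjacent_sign_changes (zs @ [hd zs])"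
proof -
  define j where "j = (LEAST j. j < length xs \<and> xs ! j \<noteq> 0)"
  obtain i where i: "i < length xs" "xs ! i \<noteq> 0" using assms by (auto simp: in_set_conv_nth)
  have j: "j < length xs \<and> xs ! j \<noteq> 0"
    unfolding j_def by (rule LeastI[of _ i]) (use i in auto)
  have "xs ! k = 0" if "k < j" for k
    using not_less_Least[of k "\<lambda>j. j < length xs \<and> xs ! j \<noteq> 0"] that j
    unfolding j_def[symmetric] by auto
  then have take_zero: "filter (\<lambda>x. x \<noteq> 0) (take j xs) = []"
    by (auto simp: filter_empty_conv in_set_conv_nth)
  have drop_j: "drop j xs = xs ! j # drop (Suc j) xs"
    using j by (simp add: Cons_nth_drop_Suc)
  have zs_drop: "zs = filter (\<lambda>x. x \<noteq> 0) (drop j xs)"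
    unfolding zs_def using take_zero by (metis append_take_drop_id filter_append self_append_conv2)
  then have "hd zs = xs ! j"
    using drop_j j by simp
  then have "filter (\<lambda>x. x \<noteq> 0) (drop j xs @ take j xs @ [xs ! j]) = zs @ [hd zs]"
    using zs_drop take_zero j by simp
  moreover have "\<not> (\<forall>x\<in>set xs. x = 0)" using assms(1) by blast
  ultimately show ?thesis
    unfolding cyc_sign_changes_def j_def[symmetric] Let_def sign_changes_eq_adjacent by (simp only: if_False)
qed

lemma even_cyc_sign_changes: "even (cyc_sign_changes xs)"
proof (cases "\<exists>x\<in>set xs. x \<noteq> 0")
  case True
  let ?z = "filter (\<lambda>x. x \<noteq> 0) xs"
  have ne: "?z \<noteq> []" using True by (auto simp: filter_empty_conv)
  then have "hd ?z \<noteq> 0" using hd_in_set[OF ne] by simp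
  then have "hd (?z @ [hd ?z]) * last (?z @ [hd ?z]) > 0"
    using ne by (auto simp: zero_less_mult_iff linorder_neq_iff)
  then show ?thesis
    unfolding cyc_sign_changes_eq_adjacent[OF True] by (subst even_adjacent_sign_changes_iff) auto
qed (auto simp: cyc_sign_changes_def)

lemma sign_changes_le_cyc_sign_changes: "sign_changes xs \<le> cyc_sign_changes xs"
proof (cases "\<exists>x\<in>set xs. x \<noteq> 0")
  case True
  let ?z = "filter (\<lambda>x. x \<noteq> 0) xs"
  have "?z \<noteq> []" using True by (auto simp: filter_empty_conv)
  then show ?thesis
    unfolding cyc_sign_changes_eq_adjacent[OF True] sign_changes_eq_adjacent
    using adjacent_sign_changes_append[of ?z "[hd ?z]"] by simp
next
  case False
  then have "filter (\<lambda>x. x \<noteq> 0) xs = []" by (auto simp: filter_empty_conv)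
  then show ?thesis unfolding sign_changes_eq_adjacent by simp
qed

definition cyclically_ordered :: "real list \<Rightarrow> bool" where
  "cyclically_ordered ts \<longleftrightarrow> sorted_wrt (<) ts \<and> (ts \<noteq> [] \<longrightarrow> last ts < hd ts + 2 * pi)"

lemma cyc_sign_changes_fun_le_iff:
  "cyc_sign_changes_fun f \<le> enat c \<longleftrightarrow>
    (\<forall>ts. cyclically_ordered ts \<longrightarrow> cyc_sign_changes (map (\<lambda>t. f (cis t)) ts) \<le> c)"
  unfolding cyc_sign_changes_fun_def cyclically_ordered_def by (auto simp: SUP_le_iff)

lemma cyc_sign_changes_fun_le_even:
  assumes "cyc_sign_changes_fun f \<le> enat c"
  shows "cyc_sign_changes_fun f \<le> enat (2 * (c div 2))"
  unfolding cyc_sign_changes_fun_le_iff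
proof (intro allI impI)
  fix ts assume "cyclically_ordered ts"
  then have le: "cyc_sign_changes (map (\<lambda>t. f (cis t)) ts) \<le> c"
    using assms cyc_sign_changes_fun_le_iff by blast
  obtain m where m: "cyc_sign_changes (map (\<lambda>t. f (cis t)) ts) = 2 * m"
    using even_cyc_sign_changes by (metis evenE)
  then have "m \<le> c div 2" using le by (metis div_le_mono nonzero_mult_div_cancel_left zero_neq_numeral)
  then show "cyc_sign_changes (map (\<lambda>t. f (cis t)) ts) \<le> 2 * (c div 2)" unfolding m by simp
qed

lemma sorted_wrt_less_hd_le_last:
  assumes "sorted_wrt (<) us" "u \<in> set us"
  shows "hd us \<le> u \<and> u \<le> (last us :: real)"
proof -
  obtain i where i: "i < length us" "u = us ! i" using assms(2) by (auto simp: in_set_conv_nth)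
  have "sorted us" using assms(1) by (rule strict_sorted_imp_sorted)
  moreover have "us \<noteq> []" using i by auto
  ultimately show ?thesis
    using i sorted_nth_mono[of us 0 i] sorted_nth_mono[of us i "length us - 1"]
    by (auto simp: hd_conv_nth last_conv_nth)
qed

lemma set_dropWhile_less_ge:
  "sorted_wrt (<) ts \<Longrightarrow> t \<in> set (dropWhile (\<lambda>t. t < c) ts) \<Longrightarrow> c \<le> (t::real)"
  by (induction ts) (auto split: if_splits)

lemma sign_changes_mask_le_periods:
  assumes bound: "cyc_sign_changes_fun f \<le> enat c"
  shows "sorted_wrt (<) ts \<Longrightarrow> \<forall>t\<in>set ts. a \<le> t \<and> t < a + 2 * pi * real B \<Longrightarrow>
    sign_changes (map (\<lambda>t. if P t then f (cis t) else 0) ts) \<le> B * (c + 1)"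
proof (induction B arbitrary: a ts)
  case 0
  then have "ts = []" by (cases ts) auto
  then show ?case by (simp add: sign_changes_def)
next
  case (Suc B)
  let ?g = "\<lambda>t. if P t then f (cis t) else 0"
  define ts1 where "ts1 = takeWhile (\<lambda>t. t < a + 2 * pi) ts"
  define ts2 where "ts2 = dropWhile (\<lambda>t. t < a + 2 * pi) ts"
  have ts: "ts = ts1 @ ts2" unfolding ts1_def ts2_def by simp
  have sorted: "sorted_wrt (<) ts1" "sorted_wrt (<) ts2"
    using Suc.prems(1) unfolding ts by (auto simp: sorted_wrt_append)
  have in1: "\<forall>t\<in>set ts1. a \<le> t \<and> t < a + 2 * pi"
    using Suc.prems(2) unfolding ts1_def by (auto dest: set_takeWhileD)
  have in2: "\<forall>t\<in>set ts2. a + 2 * pi \<le> t \<and> t < a + 2 * pi + 2 * pi * real B"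
  proof
    fix t assume t: "t \<in> set ts2"
    have "a + 2 * pi \<le> t" using set_dropWhile_less_ge[OF Suc.prems(1)] t unfolding ts2_def by blast
    moreover have "t < a + 2 * pi * real (Suc B)" using Suc.prems(2) t unfolding ts by auto
    ultimately show "a + 2 * pi \<le> t \<and> t < a + 2 * pi + 2 * pi * real B" by (simp add: algebra_simps)
  qed
  have "last ts1 < hd ts1 + 2 * pi" if "ts1 \<noteq> []"
  proof -
    have "last ts1 < a + 2 * pi" "a \<le> hd ts1"
      using in1 last_in_set[OF that] hd_in_set[OF that] by auto
    then show ?thesis by linarith
  qed
  then have "cyclically_ordered ts1" using sorted(1) unfolding cyclically_ordered_def by blast
  then have "cyc_sign_changes (map (\<lambda>t. f (cis t)) ts1) \<le> c"
    using bound cyc_sign_changes_fun_le_iff by blast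
  then have "sign_changes (map ?g ts1) \<le> c"
    using sign_changes_mask[of P "\<lambda>t. f (cis t)" ts1]
      sign_changes_le_cyc_sign_changes[of "map (\<lambda>t. f (cis t)) ts1"]
    by linarith
  moreover have "sign_changes (map ?g ts2) \<le> B * (c + 1)"
    using Suc.IH[OF sorted(2)] in2 by blast
  moreover have "sign_changes (map ?g ts) \<le> sign_changes (map ?g ts1) + sign_changes (map ?g ts2) + 1"
    using sign_changes_append_le[of "map ?g ts1" "map ?g ts2"] unfolding ts by simp
  ultimately show ?case by simp
qed

definition periodic_copies :: "real list \<Rightarrow> nat \<Rightarrow> real list" where
  "periodic_copies us N = concat (map (\<lambda>j. map (\<lambda>u. u + 2 * pi * real j) us) [0..<N])"

lemma set_periodic_copies:
  "x \<in> set (periodic_copies us N) \<longleftrightarrow> (\<exists>u\<in>set us. \<exists>j<N. x = u + 2 * pi * real j)"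
  unfolding periodic_copies_def by (auto; blast)

lemma sorted_periodic_copies:
  assumes "cyclically_ordered us"
  shows "sorted_wrt (<) (periodic_copies us N)"
proof (induction N)
  case (Suc N)
  have sorted: "sorted_wrt (<) us" and span: "us \<noteq> [] \<Longrightarrow> last us < hd us + 2 * pi"
    using assms unfolding cyclically_ordered_def by auto
  have "x < v + 2 * pi * real N" if x: "x \<in> set (periodic_copies us N)" and v: "v \<in> set us" for x v
  proof -
    obtain u j where u: "u \<in> set us" "j < N" "x = u + 2 * pi * real j"
      using set_periodic_copies[THEN iffD1, OF x] by blast
    have "2 * pi * (real j + 1) \<le> 2 * pi * real N" using u(2) by simp
    moreover have "u \<le> last us" "hd us \<le> v"
      using sorted_wrt_less_hd_le_last[OF sorted] u(1) v by auto
    moreover have "last us < hd us + 2 * pi" using span v by (cases us) auto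
    ultimately show ?thesis using u(3) by (simp add: algebra_simps)
  qed
  moreover have "sorted_wrt (<) (map (\<lambda>u. u + 2 * pi * real N) us)"
    unfolding sorted_wrt_map by (rule sorted_wrt_mono_rel[OF _ sorted]) simp
  ultimately show ?case
    using Suc.IH by (auto simp: periodic_copies_def sorted_wrt_append)
qed (simp add: periodic_copies_def)

lemma map_periodic_copies:
  assumes "\<And>u j. h (u + 2 * pi * real j) = h u"
  shows "map h (periodic_copies us N) = concat (replicate N (map h us))"
proof (induction N)
  case (Suc N)
  have "concat (replicate N (map h us)) @ map h us = map h us @ concat (replicate N (map h us))"
    by (induction N) auto
  with Suc show ?case by (simp add: periodic_copies_def assms comp_def)
qed (simp add: periodic_copies_def)

lemma cis_add_2pi_int: "cis (x + 2 * pi * of_int k) = cis x"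
  by (simp flip: cis_mult)

lemma Arg_cis_eq_add_2pi_int: "\<exists>m::int. Arg (cis s) = s + 2 * pi * of_int m"
proof -
  have "cis (Arg (cis s) - s) = 1"
    using cis_Arg[of "cis s"] by (simp add: sgn_eq cis_divide[symmetric])
  then obtain m where "Arg (cis s) - s = of_int m * (2 * pi)" unfolding cis_eq_1_iff by blast
  then show ?thesis by (auto simp: algebra_simps)
qed

definition periodization :: "(real \<Rightarrow> real) \<Rightarrow> real \<Rightarrow> real" where
  "periodization K s = (\<Sum>\<^sub>\<infinity>k::int. K (s + 2 * pi * of_int k))"

lemma wrapped_kernel_cis_diff: "wrapped_kernel K (cis y * inverse (cis t)) = periodization K (y - t)"
proof -
  obtain m :: int where m: "Arg (cis (y - t)) = (y - t) + 2 * pi * of_int m"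
    using Arg_cis_eq_add_2pi_int by blast
  have "(\<Sum>\<^sub>\<infinity>k::int. K ((y - t) + 2 * pi * of_int m + 2 * pi * of_int k))
      = (\<Sum>\<^sub>\<infinity>k::int. K ((y - t) + 2 * pi * of_int k))"
    by (rule infsum_reindex_bij_witness[of UNIV "\<lambda>k. k - m" "\<lambda>k. k + m"]) (auto simp: algebra_simps)
  moreover have "cis y * inverse (cis t) = cis (y - t)" by (simp add: cis_inverse cis_mult)
  ultimately show ?thesis
    unfolding wrapped_kernel_def periodization_def by (simp only: m)
qed

section \<open>Periodization of the kernel\<close>

lemma sum_indicator_period_le_1:
  "(\<Sum>k\<in>S. indicator {0..<2 * pi} (c + 2 * pi * of_int k - x)) \<le> (1::real)"
proof (cases "finite S")
  case True
  have "indicator {0..<2 * pi} (c + 2 * pi * of_int k - x) = (if k = \<lceil>(x - c) / (2 * pi)\<rceil> then 1 else (0::real))"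
    for k :: int
  proof -
    have "(0 \<le> c + 2 * pi * of_int k - x \<and> c + 2 * pi * of_int k - x < 2 * pi) \<longleftrightarrow>
        (of_int k - 1 < (x - c) / (2 * pi) \<and> (x - c) / (2 * pi) \<le> of_int k)"
      using pi_gt_zero by (auto simp: field_simps)
    moreover have "k = \<lceil>(x - c) / (2 * pi)\<rceil> \<longleftrightarrow>
        (of_int k - 1 < (x - c) / (2 * pi) \<and> (x - c) / (2 * pi) \<le> of_int k)"
      by (metis ceiling_eq_iff)
    ultimately show ?thesis by (simp add: indicator_def)
  qed
  with True show ?thesis by (simp add: sum.delta')
qed simp

lemma nn_integral_partial_periodization_le:
  fixes K :: "real \<Rightarrow> real"
  assumes nonneg: "\<And>t. K t \<ge> 0" and K_meas[measurable]: "K \<in> borel_measurable borel" and "finite S"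
  shows "(\<integral>\<^sup>+ t. ennreal (indicator {0..<2 * pi} t * (\<Sum>k\<in>S. K (c - t + 2 * pi * of_int k))) \<partial>lborel)
    \<le> (\<integral>\<^sup>+ x. ennreal (K x) \<partial>lborel)"
proof -
  have "(\<integral>\<^sup>+ t. ennreal (indicator {0..<2 * pi} t * (\<Sum>k\<in>S. K (c - t + 2 * pi * of_int k))) \<partial>lborel)
      = (\<Sum>k\<in>S. \<integral>\<^sup>+ t. ennreal (indicator {0..<2 * pi} t * K (c - t + 2 * pi * of_int k)) \<partial>lborel)"
    by (subst nn_integral_sum[symmetric], measurable)
      (auto simp: sum_distrib_left indicator_def nonneg sum_nonneg intro!: nn_integral_cong)
  also have "\<dots> = (\<Sum>k\<in>S. \<integral>\<^sup>+ x. ennreal (indicator {0..<2 * pi} (c + 2 * pi * of_int k - x) * K x) \<partial>lborel)"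
  proof (rule sum.cong[OF refl])
    fix k :: int
    show "(\<integral>\<^sup>+ t. ennreal (indicator {0..<2 * pi} t * K (c - t + 2 * pi * of_int k)) \<partial>lborel)
        = (\<integral>\<^sup>+ x. ennreal (indicator {0..<2 * pi} (c + 2 * pi * of_int k - x) * K x) \<partial>lborel)"
      using nn_integral_real_affine[of "\<lambda>t. ennreal (indicator {0..<2 * pi} t * K (c - t + 2 * pi * of_int k))"
          "-1" "c + 2 * pi * of_int k"]
      by simp
  qed
  also have "\<dots> = (\<integral>\<^sup>+ x. ennreal ((\<Sum>k\<in>S. indicator {0..<2 * pi} (c + 2 * pi * of_int k - x)) * K x) \<partial>lborel)"
    by (subst nn_integral_sum[symmetric], measurable)
      (auto simp: sum_distrib_right indicator_def nonneg intro!: nn_integral_cong)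
  also have "\<dots> \<le> (\<integral>\<^sup>+ x. ennreal (K x) \<partial>lborel)"
    using sum_indicator_period_le_1 nonneg
    by (intro nn_integral_mono ennreal_leI) (metis mult_right_mono mult_1)
  finally show ?thesis .
qed

lemma summable_on_int_if_symmetric_sums_bounded:
  fixes g :: "int \<Rightarrow> real"
  assumes "\<And>k. g k \<ge> 0" and "\<And>n. (\<Sum>k\<in>{-int n..int n}. g k) \<le> B"
  shows "g summable_on UNIV"
proof (rule nonneg_bdd_above_summable_on)
  show "bdd_above (sum g ` {F. F \<subseteq> UNIV \<and> finite F})"
  proof (rule bdd_aboveI2)
    fix F :: "int set" assume "F \<in> {F. F \<subseteq> UNIV \<and> finite F}"
    then have "finite F" by simp
    then obtain m where "\<forall>k\<in>F. \<bar>k\<bar> \<le> m" by (metis Max_ge finite_imageI imageI)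
    then have F: "F \<subseteq> {-int (nat m)..int (nat m)}" by force
    have "sum g F \<le> (\<Sum>k\<in>{-int (nat m)..int (nat m)}. g k)" by (rule sum_mono2[OF _ F]) (auto intro: assms(1))
    then show "sum g F \<le> B" using assms(2) order_trans by blast
  qed
qed (use assms(1) in auto)

lemma tendsto_symmetric_sums_infsum:
  assumes "(g :: int \<Rightarrow> real) summable_on UNIV"
  shows "(\<lambda>n. \<Sum>k\<in>{-int n..int n}. g k) \<longlonglongrightarrow> infsum g UNIV"
proof -
  have "filterlim (\<lambda>n. {-int n..int n}) (finite_subsets_at_top UNIV) sequentially"
    unfolding filterlim_finite_subsets_at_top
  proof (intro allI impI)
    fix X :: "int set" assume "finite X \<and> X \<subseteq> UNIV"
    then obtain m where m: "\<forall>k\<in>X. \<bar>k\<bar> \<le> m" by (metis Max_ge finite_imageI imageI)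
    show "\<forall>\<^sub>F n in sequentially. finite {-int n..int n} \<and> X \<subseteq> {-int n..int n} \<and> {-int n..int n} \<subseteq> UNIV"
      unfolding eventually_sequentially using m by (intro exI[of _ "nat m"]) force
  qed
  from filterlim_compose[OF infsum_tendsto[OF assms] this] show ?thesis by (simp add: o_def)
qed

text \<open>The integral of the periodization over one period is the integral of K.\<close>
lemma periodization_summable_ae:
  fixes K :: "real \<Rightarrow> real"
  assumes nonneg: "\<And>t. K t \<ge> 0" and "integrable lborel K"
  shows "AE t in lborel. t \<in> {0..<2 * pi} \<longrightarrow> (\<lambda>k::int. K (c - t + 2 * pi * of_int k)) summable_on UNIV"
proof -
  have [measurable]: "K \<in> borel_measurable borel"
    using borel_measurable_integrable[OF assms(2)] by simp
  define P where "P n t = ennreal (indicator {0..<2 * pi} t * (\<Sum>k\<in>{-int n..int n}. K (c - t + 2 * pi * of_int k)))"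
    for n t
  have [measurable]: "P n \<in> borel_measurable lborel" for n unfolding P_def by measurable
  have inc: "incseq P"
    unfolding P_def
    by (intro incseq_SucI le_funI ennreal_leI mult_left_mono sum_mono2) (auto intro: nonneg)
  have "(\<integral>\<^sup>+ t. (SUP n. P n t) \<partial>lborel) = (SUP n. \<integral>\<^sup>+ t. P n t \<partial>lborel)"
    by (rule nn_integral_monotone_convergence_SUP[OF inc]) simp
  also have "\<dots> \<le> (\<integral>\<^sup>+ x. ennreal (K x) \<partial>lborel)"
    unfolding P_def by (intro SUP_least nn_integral_partial_periodization_le nonneg) auto
  also have "\<dots> < \<infinity>"
    using nn_integral_eq_integral[OF assms(2)] nonneg by simp
  finally have "AE t in lborel. (SUP n. P n t) \<noteq> \<infinity>"
    by (intro nn_integral_PInf_AE) auto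
  then show ?thesis
  proof (rule AE_mp, intro AE_I2 impI)
    fix t assume finite: "(SUP n. P n t) \<noteq> \<infinity>" and t: "t \<in> {0..<2 * pi}"
    show "(\<lambda>k::int. K (c - t + 2 * pi * of_int k)) summable_on UNIV"
    proof (rule summable_on_int_if_symmetric_sums_bounded)
      fix n
      have "P n t \<le> (SUP n. P n t)" by (rule SUP_upper) simp
      then have "enn2real (P n t) \<le> enn2real (SUP n. P n t)"
        using finite by (intro enn2real_mono) (simp_all add: less_top[symmetric])
      then show "(\<Sum>k\<in>{-int n..int n}. K (c - t + 2 * pi * of_int k)) \<le> enn2real (SUP n. P n t)"
        using t by (simp add: P_def sum_nonneg nonneg)
    qed (rule nonneg)
  qed
qed

section \<open>The truncated periodic extension\<close>

definition truncated_piece :: "nat \<Rightarrow> (complex \<Rightarrow> real) \<Rightarrow> real \<Rightarrow> real" where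
  "truncated_piece n f t = indicator {0..<2 * pi} t * (if \<bar>f (cis t)\<bar> \<le> real n then f (cis t) else 0)"

text \<open>Only the periods 0, ..., N - 1 are sampled later; the n extra periods on either side absorb
  the tails of K.\<close>
definition truncated_extension :: "nat \<Rightarrow> nat \<Rightarrow> (complex \<Rightarrow> real) \<Rightarrow> real \<Rightarrow> real" where
  "truncated_extension n N f x = (\<Sum>k\<in>{-int n..<int N + int n}. truncated_piece n f (x - 2 * pi * of_int k))"

lemma measurable_L1_circle:
  assumes "L1_circle f"
  shows "(\<lambda>t. indicator {0..2 * pi} t * f (cis t)) \<in> borel_measurable borel"
proof -
  have "integrable lborel (\<lambda>t. indicator {0..2 * pi} t * f (cis t))"
    using assms by (simp add: L1_circle_def set_integrable_def)
  from borel_measurable_integrable[OF this] show ?thesis by simp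
qed

lemma measurable_truncated_piece:
  assumes "L1_circle f"
  shows "truncated_piece n f \<in> borel_measurable borel"
proof -
  note [measurable] = measurable_L1_circle[OF assms]
  have piece: "truncated_piece n f = (\<lambda>t. indicator {0..<2 * pi} t *
      (if \<bar>indicator {0..2 * pi} t * f (cis t)\<bar> \<le> real n then indicator {0..2 * pi} t * f (cis t) else 0))"
    by (auto simp: truncated_piece_def indicator_def)
  show ?thesis unfolding piece by measurable
qed

lemma abs_truncated_piece_le: "\<bar>truncated_piece n f t\<bar> \<le> real n"
  by (auto simp: truncated_piece_def indicator_def)

lemma integrable_kernel_times_truncated_piece:
  fixes K :: "real \<Rightarrow> real"
  assumes K: "integrable lborel K" and f: "L1_circle f"
  shows "integrable lborel (\<lambda>x. K (a - x) * truncated_piece n f (x - b))"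
proof (rule Bochner_Integration.integrable_bound)
  show "integrable lborel (\<lambda>x. real n * K (a - x))"
    using lborel_integrable_real_affine[OF K, of "-1" a] by simp
  note [measurable] = borel_measurable_integrable[OF K, unfolded measurable_lborel1]
    measurable_truncated_piece[OF f]
  show "(\<lambda>x. K (a - x) * truncated_piece n f (x - b)) \<in> borel_measurable lborel" by measurable
  show "AE x in lborel. norm (K (a - x) * truncated_piece n f (x - b)) \<le> norm (real n * K (a - x))"
  proof (rule AE_I2)
    fix x
    have "\<bar>K (a - x)\<bar> * \<bar>truncated_piece n f (x - b)\<bar> \<le> \<bar>K (a - x)\<bar> * real n"
      by (rule mult_left_mono[OF abs_truncated_piece_le]) simp
    then show "norm (K (a - x) * truncated_piece n f (x - b)) \<le> norm (real n * K (a - x))"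
      by (simp add: abs_mult mult.commute)
  qed
qed

lemma line_conv_exists_truncated_extension:
  fixes K :: "real \<Rightarrow> real"
  assumes "integrable lborel K" and "L1_circle f"
  shows "line_conv_exists K (truncated_extension n N f)"
  unfolding line_conv_exists_def truncated_extension_def sum_distrib_left
  by (intro allI Bochner_Integration.integrable_sum integrable_kernel_times_truncated_piece assms)

lemma line_conv_truncated_extension:
  fixes K :: "real \<Rightarrow> real"
  assumes K: "integrable lborel K" and f: "L1_circle f"
  shows "line_conv K (truncated_extension n N f) y =
    (\<integral>t. (\<Sum>k\<in>{-int n..<int N + int n}. K (y - 2 * pi * of_int k - t)) * truncated_piece n f t \<partial>lborel)"
proof -
  let ?S = "{-int n..<int N + int n}"
  have "line_conv K (truncated_extension n N f) y
      = (\<integral>x. (\<Sum>k\<in>?S. K (y - x) * truncated_piece n f (x - 2 * pi * of_int k)) \<partial>lborel)"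
    unfolding line_conv_def truncated_extension_def by (simp add: sum_distrib_left)
  also have "\<dots> = (\<Sum>k\<in>?S. \<integral>x. K (y - x) * truncated_piece n f (x - 2 * pi * of_int k) \<partial>lborel)"
    by (rule Bochner_Integration.integral_sum) (rule integrable_kernel_times_truncated_piece[OF K f])
  also have "\<dots> = (\<Sum>k\<in>?S. \<integral>t. K (y - 2 * pi * of_int k - t) * truncated_piece n f t \<partial>lborel)"
  proof (rule sum.cong[OF refl])
    fix k :: int
    show "(\<integral>x. K (y - x) * truncated_piece n f (x - 2 * pi * of_int k) \<partial>lborel)
        = (\<integral>t. K (y - 2 * pi * of_int k - t) * truncated_piece n f t \<partial>lborel)"
      using lborel_integral_real_affine[of 1 "\<lambda>x. K (y - x) * truncated_piece n f (x - 2 * pi * of_int k)"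
          "2 * pi * of_int k"]
      by (simp add: algebra_simps)
  qed
  also have "\<dots> = (\<integral>t. (\<Sum>k\<in>?S. K (y - 2 * pi * of_int k - t) * truncated_piece n f t) \<partial>lborel)"
    using integrable_kernel_times_truncated_piece[OF K f, of _ n 0]
    by (intro Bochner_Integration.integral_sum[symmetric]) simp
  finally show ?thesis by (simp add: sum_distrib_right)
qed

lemma truncated_extension_eq:
  "truncated_extension n N f x =
    (if \<lfloor>x / (2 * pi)\<rfloor> \<in> {-int n..<int N + int n} \<and> \<bar>f (cis x)\<bar> \<le> real n then f (cis x) else 0)"
proof -
  have piece: "truncated_piece n f (x - 2 * pi * of_int k)
      = (if k = \<lfloor>x / (2 * pi)\<rfloor> then if \<bar>f (cis x)\<bar> \<le> real n then f (cis x) else 0 else 0)"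
    for k :: int
  proof -
    have "cis (x - 2 * pi * of_int k) = cis x"
      using cis_add_2pi_int[of x "-k"] by simp
    moreover have "(0 \<le> x - 2 * pi * of_int k \<and> x - 2 * pi * of_int k < 2 * pi) \<longleftrightarrow>
        (of_int k \<le> x / (2 * pi) \<and> x / (2 * pi) < of_int k + 1)"
      using pi_gt_zero by (auto simp: field_simps)
    moreover have "k = \<lfloor>x / (2 * pi)\<rfloor> \<longleftrightarrow> (of_int k \<le> x / (2 * pi) \<and> x / (2 * pi) < of_int k + 1)"
      by (metis floor_eq_iff)
    ultimately show ?thesis by (simp add: truncated_piece_def indicator_def)
  qed
  then show ?thesis unfolding truncated_extension_def piece by simp
qed

lemma sign_changes_fun_truncated_extension_le:
  assumes "cyc_sign_changes_fun f \<le> enat c"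
  shows "sign_changes_fun (truncated_extension n N f) \<le> enat ((N + 2 * n) * (c + 1))"
  unfolding sign_changes_fun_def
proof (rule SUP_least)
  fix ts :: "real list" assume "ts \<in> {ts. sorted_wrt (<) ts}"
  define Q where "Q x \<longleftrightarrow> \<lfloor>x / (2 * pi)\<rfloor> \<in> {-int n..<int N + int n}" for x
  define P where "P x \<longleftrightarrow> Q x \<and> \<bar>f (cis x)\<bar> \<le> real n" for x
  have extension: "truncated_extension n N f = (\<lambda>x. if P x then f (cis x) else 0)"
    unfolding P_def Q_def by (rule ext) (rule truncated_extension_eq)
  have "sign_changes (map (truncated_extension n N f) ts)
      = sign_changes (map (truncated_extension n N f) (filter Q ts))"
    by (rule sign_changes_filter_support[symmetric]) (simp add: extension P_def)
  also have "\<dots> \<le> (N + 2 * n) * (c + 1)"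
    unfolding extension
  proof (rule sign_changes_mask_le_periods[OF assms])
    show "sorted_wrt (<) (filter Q ts)"
      using \<open>ts \<in> _\<close> by (simp add: sorted_wrt_filter)
    show "\<forall>t\<in>set (filter Q ts). - (2 * pi * real n) \<le> t \<and> t < - (2 * pi * real n) + 2 * pi * real (N + 2 * n)"
    proof
      fix t assume "t \<in> set (filter Q ts)"
      then have "- real n \<le> t / (2 * pi)" "t / (2 * pi) < real N + real n"
        by (auto simp: Q_def le_floor_iff floor_less_iff)
      then have "- real n * (2 * pi) \<le> t" "t < (real N + real n) * (2 * pi)"
        by (simp_all add: le_divide_eq divide_less_eq)
      then show "- (2 * pi * real n) \<le> t \<and> t < - (2 * pi * real n) + 2 * pi * real (N + 2 * n)"
        by (simp add: algebra_simps)
    qed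
  qed
  finally show "enat (sign_changes (map (truncated_extension n N f) ts)) \<le> enat ((N + 2 * n) * (c + 1))"
    by simp
qed

section \<open>Approximation of the circle convolution\<close>

lemma set_integral_Icc_eq_Ico:
  fixes g :: "real \<Rightarrow> real"
  assumes "set_integrable lborel {a..b} g"
  shows "set_integrable lborel {a..<b} g" "(LINT t:{a..b}|lborel. g t) = (LINT t:{a..<b}|lborel. g t)"
proof -
  show Ico: "set_integrable lborel {a..<b} g"
    by (rule set_integrable_subset[OF assms]) auto
  show "(LINT t:{a..b}|lborel. g t) = (LINT t:{a..<b}|lborel. g t)"
    using Ico assms AE_lborel_singleton[of b]
    by (intro set_integral_cong_set) (auto simp: set_integrable_def set_borel_measurable_def
        intro: borel_measurable_integrable elim!: eventually_mono)
qed

lemma periodization_nonneg: "(\<And>t. K t \<ge> 0) \<Longrightarrow> periodization K s \<ge> 0"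
  unfolding periodization_def by (rule infsum_nonneg) auto

lemma circ_conv_wrapped_kernel:
  "2 * pi * circ_conv (wrapped_kernel K) f (cis u)
    = (LINT t:{0..2 * pi}|lborel. periodization K (u - t) * f (cis t))"
  unfolding circ_conv_def wrapped_kernel_cis_diff by simp

text \<open>The bound does not involve s, which makes the approximation below uniform in the range of
  summation.\<close>
lemma truncation_error_le:
  fixes p s V x :: real
  assumes "0 \<le> p" "p \<le> s" "s \<le> V"
  shows "\<bar>s * (if \<bar>x\<bar> \<le> n then x else 0) - V * x\<bar>
    \<le> \<bar>V * x\<bar> * (if \<bar>x\<bar> \<le> n then 0 else 1) + \<bar>V * x\<bar> - p * \<bar>x\<bar>"
proof (cases "\<bar>x\<bar> \<le> n")
  case True
  have "\<bar>s * x - V * x\<bar> = (V - s) * \<bar>x\<bar>"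
    using assms by (simp add: abs_mult flip: left_diff_distrib)
  also have "\<dots> \<le> (V - p) * \<bar>x\<bar>"
    using assms by (intro mult_right_mono) auto
  finally show ?thesis using True assms by (simp add: abs_mult algebra_simps)
next
  case False
  have "p * \<bar>x\<bar> \<le> V * \<bar>x\<bar>" using assms by (intro mult_right_mono) auto
  then show ?thesis using False assms by (simp add: abs_mult)
qed

lemma partial_periodization_truncation_error:
  fixes K :: "real \<Rightarrow> real" and s y :: real
  assumes nonneg: "\<And>t. K t \<ge> 0" and summable: "(\<lambda>k::int. K (s + 2 * pi * of_int k)) summable_on UNIV"
  defines "e n \<equiv> \<bar>periodization K s * y\<bar> * (if \<bar>y\<bar> \<le> real n then 0 else 1) + \<bar>periodization K s * y\<bar>
    - (\<Sum>k\<in>{-int n..int n}. K (s + 2 * pi * of_int k)) * \<bar>y\<bar>"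
  shows "finite S \<Longrightarrow> {-int n..int n} \<subseteq> S \<Longrightarrow>
      \<bar>(\<Sum>k\<in>S. K (s + 2 * pi * of_int k)) * (if \<bar>y\<bar> \<le> real n then y else 0) - periodization K s * y\<bar> \<le> e n"
    and "e \<longlonglongrightarrow> 0"
proof -
  have partial_le: "(\<Sum>k\<in>S. K (s + 2 * pi * of_int k)) \<le> periodization K s" if "finite S" for S
    unfolding periodization_def by (rule finite_sum_le_infsum[OF summable that]) (auto intro: nonneg)
  show "\<bar>(\<Sum>k\<in>S. K (s + 2 * pi * of_int k)) * (if \<bar>y\<bar> \<le> real n then y else 0) - periodization K s * y\<bar> \<le> e n"
    if "finite S" "{-int n..int n} \<subseteq> S"
    unfolding e_def using partial_le[OF that(1)]
    by (intro truncation_error_le sum_nonneg sum_mono2[OF that]) (auto intro: nonneg)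
  have "(\<lambda>n. \<Sum>k\<in>{-int n..int n}. K (s + 2 * pi * of_int k)) \<longlonglongrightarrow> periodization K s"
    unfolding periodization_def by (rule tendsto_symmetric_sums_infsum[OF summable])
  then have tail: "(\<lambda>n. \<bar>periodization K s * y\<bar> - (\<Sum>k\<in>{-int n..int n}. K (s + 2 * pi * of_int k)) * \<bar>y\<bar>)
      \<longlonglongrightarrow> \<bar>periodization K s * y\<bar> - periodization K s * \<bar>y\<bar>"
    by (intro tendsto_intros)
  obtain m :: nat where "\<bar>y\<bar> \<le> real m" using real_arch_simple by blast
  then have "\<forall>\<^sub>F n in sequentially. \<bar>periodization K s * y\<bar> * (if \<bar>y\<bar> \<le> real n then 0 else 1) = 0"
    unfolding eventually_sequentially
    by (intro exI[of _ m] allI impI) (auto dest: order_trans[OF _ of_nat_mono])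
  from tendsto_add[OF tendsto_eventually[OF this] tail]
  show "e \<longlonglongrightarrow> 0"
    unfolding e_def[abs_def] using periodization_nonneg[of K s, OF nonneg] by (simp add: add_diff_eq abs_mult)
qed

lemma integrable_partial_periodization_times_truncated_piece:
  fixes K :: "real \<Rightarrow> real"
  assumes "integrable lborel K" "L1_circle f" "finite S"
  shows "integrable lborel (\<lambda>t. (\<Sum>k\<in>S. K (u - t + 2 * pi * of_int k)) * truncated_piece n f t)"
proof -
  have "(\<lambda>t. (\<Sum>k\<in>S. K (u - t + 2 * pi * of_int k)) * truncated_piece n f t)
      = (\<lambda>t. \<Sum>k\<in>S. K ((u + 2 * pi * of_int k) - t) * truncated_piece n f (t - 0))"
    by (auto simp: fun_eq_iff sum_distrib_left sum_distrib_right algebra_simps)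
  moreover have "integrable lborel (\<lambda>t. K (c - t) * truncated_piece n f (t - 0))" for c
    by (rule integrable_kernel_times_truncated_piece[OF assms(1,2)])
  ultimately show ?thesis by (simp add: Bochner_Integration.integrable_sum)
qed

lemma abs_integral_diff_le_AE:
  fixes a v b :: "real \<Rightarrow> real"
  assumes "integrable lborel a" "integrable lborel v" "integrable lborel b"
    and "AE t in lborel. \<bar>a t - v t\<bar> \<le> b t"
  shows "\<bar>integral\<^sup>L lborel a - integral\<^sup>L lborel v\<bar> \<le> integral\<^sup>L lborel b"
proof -
  have "\<bar>integral\<^sup>L lborel a - integral\<^sup>L lborel v\<bar> = \<bar>\<integral>t. a t - v t \<partial>lborel\<bar>"
    using assms by simp
  also have "\<dots> \<le> (\<integral>t. \<bar>a t - v t\<bar> \<partial>lborel)"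
    by (rule integral_abs_bound)
  also have "\<dots> \<le> integral\<^sup>L lborel b"
    using assms by (intro integral_mono_AE) auto
  finally show ?thesis .
qed

text \<open>Dominated convergence, the dominating function being twice the integrand of the circle
  convolution.\<close>
lemma truncated_periodization_approx:
  fixes K :: "real \<Rightarrow> real"
  assumes nonneg: "\<And>t. K t \<ge> 0" and K: "integrable lborel K" and f: "L1_circle f"
    and conv: "set_integrable lborel {0..2 * pi} (\<lambda>t. periodization K (u - t) * f (cis t))"
  shows "\<exists>D. D \<longlonglongrightarrow> 0 \<and> (\<forall>n S. finite S \<longrightarrow> {-int n..int n} \<subseteq> S \<longrightarrow>
    \<bar>(\<integral>t. (\<Sum>k\<in>S. K (u - t + 2 * pi * of_int k)) * truncated_piece n f t \<partial>lborel)
      - (LINT t:{0..2 * pi}|lborel. periodization K (u - t) * f (cis t))\<bar> \<le> D n)"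
proof -
  define E where "E = {0..<2 * pi}"
  define v where "v t = indicator E t * (periodization K (u - t) * f (cis t))" for t
  define x where "x t = indicator E t * f (cis t)" for t
  define b where "b n t = \<bar>v t\<bar> * (if \<bar>x t\<bar> \<le> real n then 0 else 1) + \<bar>v t\<bar>
    - (\<Sum>k\<in>{-int n..int n}. K (u - t + 2 * pi * of_int k)) * \<bar>x t\<bar>" for n t
  have int_v: "integrable lborel v"
    and v_eq: "(LINT t:{0..2 * pi}|lborel. periodization K (u - t) * f (cis t)) = integral\<^sup>L lborel v"
    using set_integral_Icc_eq_Ico[OF conv] unfolding v_def[abs_def] E_def
    by (simp_all add: set_integrable_def set_lebesgue_integral_def)
  have "x = (\<lambda>t. indicator E t * (indicator {0..2 * pi} t * f (cis t)))"
    by (auto simp: x_def E_def indicator_def)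
  then have [measurable]: "x \<in> borel_measurable borel"
    using measurable_L1_circle[OF f] by (simp add: E_def)
  note [measurable] = borel_measurable_integrable[OF K, unfolded measurable_lborel1]
    borel_measurable_integrable[OF int_v, unfolded measurable_lborel1]
  have [measurable]: "b n \<in> borel_measurable borel" for n
    unfolding b_def by measurable
  have "AE t in lborel. t \<in> E \<longrightarrow> (\<lambda>k::int. K (u - t + 2 * pi * of_int k)) summable_on UNIV"
    unfolding E_def by (rule periodization_summable_ae[OF nonneg K])
  then have pointwise: "AE t in lborel. (\<forall>n S. finite S \<longrightarrow> {-int n..int n} \<subseteq> S \<longrightarrow>
      \<bar>(\<Sum>k\<in>S. K (u - t + 2 * pi * of_int k)) * truncated_piece n f t - v t\<bar> \<le> b n t) \<and>
      (\<lambda>n. b n t) \<longlonglongrightarrow> 0"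
  proof eventually_elim
    case (elim t)
    show ?case
    proof (cases "t \<in> E")
      case True
      with elim have "(\<lambda>k::int. K (u - t + 2 * pi * of_int k)) summable_on UNIV" by simp
      note error = partial_periodization_truncation_error[where s = "u - t" and y = "f (cis t)", OF nonneg this]
      have "truncated_piece n f t = (if \<bar>f (cis t)\<bar> \<le> real n then f (cis t) else 0)"
        and "v t = periodization K (u - t) * f (cis t)"
        and "b n t = \<bar>periodization K (u - t) * f (cis t)\<bar> * (if \<bar>f (cis t)\<bar> \<le> real n then 0 else 1)
          + \<bar>periodization K (u - t) * f (cis t)\<bar>
          - (\<Sum>k\<in>{-int n..int n}. K (u - t + 2 * pi * of_int k)) * \<bar>f (cis t)\<bar>" for n
        using True by (simp_all add: truncated_piece_def v_def b_def x_def E_def)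
      then show ?thesis using error by simp
    qed (simp add: b_def v_def x_def truncated_piece_def E_def)
  qed
  have dominated: "AE t in lborel. norm (b n t) \<le> 2 * \<bar>v t\<bar>" for n
    using pointwise
  proof eventually_elim
    case (elim t)
    then have "0 \<le> b n t" by (metis abs_ge_zero finite_atLeastAtMost_int order_trans subset_refl)
    moreover have "0 \<le> (\<Sum>k\<in>{-int n..int n}. K (u - t + 2 * pi * of_int k)) * \<bar>x t\<bar>"
      by (simp add: sum_nonneg nonneg)
    ultimately show ?case unfolding b_def by (auto split: if_splits)
  qed
  have int_b: "integrable lborel (b n)" for n
    by (rule Bochner_Integration.integrable_bound[where f = "\<lambda>t. 2 * \<bar>v t\<bar>"]) (use int_v dominated in auto)
  have "(\<lambda>n. integral\<^sup>L lborel (b n)) \<longlonglongrightarrow> integral\<^sup>L lborel (\<lambda>t :: real. 0 :: real)"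
    using pointwise by (intro integral_dominated_convergence[OF _ _ _ _ dominated]) (use int_v in auto)
  moreover have "\<bar>(\<integral>t. (\<Sum>k\<in>S. K (u - t + 2 * pi * of_int k)) * truncated_piece n f t \<partial>lborel)
      - integral\<^sup>L lborel v\<bar> \<le> integral\<^sup>L lborel (b n)"
    if "finite S" "{-int n..int n} \<subseteq> S" for n S
    using integrable_partial_periodization_times_truncated_piece[OF K f that(1)] int_v int_b that pointwise
    by (intro abs_integral_diff_le_AE) (auto elim: eventually_mono)
  ultimately show ?thesis
    unfolding v_eq by auto
qed

lemma cyclically_ordered_filter: "cyclically_ordered ts \<Longrightarrow> cyclically_ordered (filter P ts)"
proof -
  assume ts: "cyclically_ordered ts"
  have "last (filter P ts) < hd (filter P ts) + 2 * pi" if ne: "filter P ts \<noteq> []"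
  proof -
    have sorted: "sorted_wrt (<) ts" and "ts \<noteq> []" and span: "last ts < hd ts + 2 * pi"
      using ts ne unfolding cyclically_ordered_def by auto
    have "last (filter P ts) \<le> last ts" "hd ts \<le> hd (filter P ts)"
      using sorted_wrt_less_hd_le_last[OF sorted] last_in_set[OF ne] hd_in_set[OF ne] by auto
    with span show ?thesis by linarith
  qed
  with ts show ?thesis unfolding cyclically_ordered_def by (simp add: sorted_wrt_filter)
qed

lemma cyc_sign_changes_filter_nonzero:
  "cyc_sign_changes (map g (filter (\<lambda>t. g t \<noteq> 0) ts)) = cyc_sign_changes (map g ts)"
proof (cases "\<exists>x\<in>set (map g ts). x \<noteq> 0")
  case True
  moreover have "filter (\<lambda>x. x \<noteq> 0) (map g (filter (\<lambda>t. g t \<noteq> 0) ts)) = filter (\<lambda>x. x \<noteq> 0) (map g ts)"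
    by (induction ts) auto
  moreover from True have "\<exists>x\<in>set (map g (filter (\<lambda>t. g t \<noteq> 0) ts)). x \<noteq> 0" by auto
  ultimately show ?thesis by (simp add: cyc_sign_changes_eq_adjacent)
qed (auto simp: cyc_sign_changes_def)

lemma zero_less_mult_if_abs_diff_less: "\<bar>a - b\<bar> < \<bar>b\<bar> \<Longrightarrow> 0 < a * (b :: real)"
  by (cases "b > 0") (auto simp: zero_less_mult_iff abs_if split: if_splits)

lemma eventually_line_conv_truncated_extension_sign:
  fixes K :: "real \<Rightarrow> real"
  assumes nonneg: "\<And>t. K t \<ge> 0" and K: "integrable lborel K" and f: "L1_circle f"
    and nonzero: "circ_conv (wrapped_kernel K) f (cis u) \<noteq> 0"
  shows "\<forall>\<^sub>F n in sequentially. \<forall>N j. j < N \<longrightarrow>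
    0 < line_conv K (truncated_extension n N f) (u + 2 * pi * real j) * circ_conv (wrapped_kernel K) f (cis u)"
proof -
  define F where "F = circ_conv (wrapped_kernel K) f (cis u)"
  have "set_integrable lborel {0..2 * pi} (\<lambda>t. periodization K (u - t) * f (cis t))"
    using nonzero circ_conv_wrapped_kernel[of K f u] not_integrable_integral_eq
    unfolding set_integrable_def set_lebesgue_integral_def by fastforce
  then obtain D where D: "D \<longlonglongrightarrow> 0" and approx: "\<And>n S. finite S \<Longrightarrow> {-int n..int n} \<subseteq> S \<Longrightarrow>
      \<bar>(\<integral>t. (\<Sum>k\<in>S. K (u - t + 2 * pi * of_int k)) * truncated_piece n f t \<partial>lborel) - 2 * pi * F\<bar> \<le> D n"
    using truncated_periodization_approx[OF nonneg K f] unfolding F_def circ_conv_wrapped_kernel by blast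
  have "\<forall>\<^sub>F n in sequentially. D n < \<bar>2 * pi * F\<bar>"
    using order_tendstoD(2)[OF D] nonzero by (simp add: F_def)
  then show ?thesis unfolding F_def[symmetric]
  proof eventually_elim
    case (elim n)
    show ?case
    proof (intro allI impI)
      fix N j :: nat assume "j < N"
      define S' where "S' = {-int n..<int N + int n}"
      define S where "S = (\<lambda>k. int j - k) ` S'"
      have "inj_on (\<lambda>k. int j - k) S'" by (auto simp: inj_on_def)
      then have "(\<Sum>k\<in>S'. K (u + 2 * pi * real j - 2 * pi * of_int k - t)) = (\<Sum>k\<in>S. K (u - t + 2 * pi * of_int k))"
        for t unfolding S_def by (simp add: sum.reindex algebra_simps)
      then have conv: "line_conv K (truncated_extension n N f) (u + 2 * pi * real j)
          = (\<integral>t. (\<Sum>k\<in>S. K (u - t + 2 * pi * of_int k)) * truncated_piece n f t \<partial>lborel)"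
        unfolding line_conv_truncated_extension[OF K f] S'_def by simp
      have "{-int n..int n} \<subseteq> S"
      proof
        fix k assume "k \<in> {-int n..int n}"
        then have "int j - k \<in> S'" using \<open>j < N\<close> by (auto simp: S'_def)
        then show "k \<in> S" unfolding S_def by (rule rev_image_eqI) simp
      qed
      moreover have "finite S" by (simp add: S_def S'_def)
      ultimately have "\<bar>line_conv K (truncated_extension n N f) (u + 2 * pi * real j) - 2 * pi * F\<bar> < \<bar>2 * pi * F\<bar>"
        using approx elim unfolding conv by fastforce
      then have "0 < line_conv K (truncated_extension n N f) (u + 2 * pi * real j) * (2 * pi * F)"
        by (rule zero_less_mult_if_abs_diff_less)
      then show "0 < line_conv K (truncated_extension n N f) (u + 2 * pi * real j) * F"
        using pi_gt_zero by (auto simp: zero_less_mult_iff mult_less_0_iff)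
    qed
  qed
qed

lemma sign_changes_periodic_copies_ge:
  assumes periodic: "\<And>u j. h (u + 2 * pi * real j) = h u"
    and agree: "\<forall>y\<in>set (periodic_copies us N). 0 < L y * h y"
    and nonzero: "\<forall>u\<in>set us. h u \<noteq> 0"
  shows "N * cyc_sign_changes (map h us) \<le> sign_changes (map L (periodic_copies us N)) + 1"
proof (cases "us = [] \<or> N = 0")
  case False
  then obtain N' where N: "N = Suc N'" and "us \<noteq> []" by (cases N) auto
  define zs where "zs = map h us"
  define b where "b = (if last zs * hd zs < 0 then 1 else (0::nat))"
  have zs: "zs \<noteq> []" "filter (\<lambda>x. x \<noteq> 0) zs = zs"
    using \<open>us \<noteq> []\<close> nonzero by (auto simp: zs_def filter_id_conv)
  have "\<exists>x\<in>set zs. x \<noteq> 0"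
    using \<open>us \<noteq> []\<close> nonzero by (cases us) (auto simp: zs_def)
  then have "cyc_sign_changes zs = adjacent_sign_changes (zs @ [hd zs])"
    using cyc_sign_changes_eq_adjacent zs(2) by metis
  also have "\<dots> = adjacent_sign_changes zs + b"
    using adjacent_sign_changes_append[of zs "[hd zs]"] zs(1) by (simp add: b_def)
  finally have "N * cyc_sign_changes zs = adjacent_sign_changes (concat (replicate N zs)) + b"
    unfolding N b_def using adjacent_sign_changes_concat_replicate[OF zs(1)] by simp
  also have "adjacent_sign_changes (concat (replicate N zs)) = adjacent_sign_changes (map L (periodic_copies us N))"
    unfolding zs_def map_periodic_copies[OF periodic, symmetric]
    using agree by (intro adjacent_sign_changes_same_signs[symmetric]) (simp add: list_all2_conv_all_nth)
  also have "\<dots> = sign_changes (map L (periodic_copies us N))"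
  proof -
    have "\<forall>x\<in>set (map L (periodic_copies us N)). x \<noteq> 0" using agree by force
    then show ?thesis by (simp add: sign_changes_eq_adjacent filter_id_conv)
  qed
  finally show ?thesis unfolding zs_def b_def by (simp split: if_splits)
qed (auto simp: cyc_sign_changes_def)

lemma sign_changes_line_conv_truncated_extension_le:
  fixes K :: "real \<Rightarrow> real"
  assumes K: "integrable lborel K" and vd: "variation_diminishing_line K" and f: "L1_circle f"
    and bound: "cyc_sign_changes_fun f \<le> enat c" and "sorted_wrt (<) ys"
  shows "sign_changes (map (line_conv K (truncated_extension n N f)) ys) \<le> (N + 2 * n) * (c + 1)"
proof -
  have "enat (sign_changes (map (line_conv K (truncated_extension n N f)) ys))
      \<le> sign_changes_fun (line_conv K (truncated_extension n N f))"
    unfolding sign_changes_fun_def using \<open>sorted_wrt (<) ys\<close> by (intro SUP_upper) simp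
  also have "\<dots> \<le> sign_changes_fun (truncated_extension n N f)"
    using vd line_conv_exists_truncated_extension[OF K f] unfolding variation_diminishing_line_def by blast
  also have "\<dots> \<le> enat ((N + 2 * n) * (c + 1))"
    by (rule sign_changes_fun_truncated_extension_le[OF bound])
  finally show ?thesis by simp
qed

lemma cyc_sign_changes_circ_conv_le_Suc:
  fixes K :: "real \<Rightarrow> real"
  assumes nonneg: "\<And>t. K t \<ge> 0" and K: "integrable lborel K"
    and vd: "variation_diminishing_line K" and f: "L1_circle f"
    and bound: "cyc_sign_changes_fun f \<le> enat c" and ts: "cyclically_ordered ts"
  shows "cyc_sign_changes (map (\<lambda>t. circ_conv (wrapped_kernel K) f (cis t)) ts) \<le> c + 1"
proof (rule ccontr)
  define h where "h t = circ_conv (wrapped_kernel K) f (cis t)" for t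
  define us where "us = filter (\<lambda>t. h t \<noteq> 0) ts"
  define m where "m = cyc_sign_changes (map h us)"
  assume "\<not> ?thesis"
  then have m_ge: "c + 2 \<le> m"
    unfolding m_def us_def cyc_sign_changes_filter_nonzero h_def by simp
  have "\<forall>u\<in>set us. \<forall>\<^sub>F n in sequentially. \<forall>N j. j < N \<longrightarrow>
      0 < line_conv K (truncated_extension n N f) (u + 2 * pi * real j) * h u"
    unfolding us_def h_def using eventually_line_conv_truncated_extension_sign[OF nonneg K f] by simp
  then have "\<forall>\<^sub>F n in sequentially. \<forall>u\<in>set us. \<forall>N j. j < N \<longrightarrow>
      0 < line_conv K (truncated_extension n N f) (u + 2 * pi * real j) * h u"
    by (simp add: eventually_ball_finite_distrib)
  then obtain n where n: "\<forall>u\<in>set us. \<forall>N j. j < N \<longrightarrow>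
      0 < line_conv K (truncated_extension n N f) (u + 2 * pi * real j) * h u"
    unfolding eventually_sequentially by blast
  define N where "N = 2 * n * (c + 1) + 2"
  define L where "L = line_conv K (truncated_extension n N f)"
  have h_periodic: "h (u + 2 * pi * real j) = h u" for u j
    using cis_add_2pi_int[of u "int j"] by (simp add: h_def)
  have "\<forall>y\<in>set (periodic_copies us N). 0 < L y * h y"
  proof
    fix y assume "y \<in> set (periodic_copies us N)"
    then obtain u j where "u \<in> set us" "j < N" "y = u + 2 * pi * real j"
      unfolding set_periodic_copies by blast
    then show "0 < L y * h y" using n h_periodic by (simp add: L_def)
  qed
  then have "N * m \<le> sign_changes (map L (periodic_copies us N)) + 1"
    unfolding m_def by (rule sign_changes_periodic_copies_ge[OF h_periodic]) (simp add: us_def)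
  moreover have "sign_changes (map L (periodic_copies us N)) \<le> (N + 2 * n) * (c + 1)"
    unfolding L_def using sorted_periodic_copies[OF cyclically_ordered_filter[OF ts]]
    by (intro sign_changes_line_conv_truncated_extension_le[OF K vd f bound]) (simp add: us_def)
  ultimately have "N * m \<le> (N + 2 * n) * (c + 1) + 1" by linarith
  moreover have "N * (c + 2) \<le> N * m" using m_ge by (rule mult_le_mono2)
  ultimately have "N * (c + 2) \<le> (N + 2 * n) * (c + 1) + 1" by linarith
  then show False by (simp add: N_def algebra_simps)
qed

lemma cyc_sign_changes_fun_circ_conv_le:
  fixes K :: "real \<Rightarrow> real"
  assumes nonneg: "\<And>t. K t \<ge> 0" and K: "integrable lborel K"
    and vd: "variation_diminishing_line K" and f: "L1_circle f"
    and bound: "cyc_sign_changes_fun f \<le> enat c"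
  shows "cyc_sign_changes_fun (circ_conv (wrapped_kernel K) f) \<le> enat c"
proof -
  \<comment> \<open>Cyclic sign counts are even, so the bound c' + 1 sharpens to c' once c' is even.\<close>
  define c' where "c' = 2 * (c div 2)"
  have bound': "cyc_sign_changes_fun f \<le> enat c'"
    unfolding c'_def using bound by (rule cyc_sign_changes_fun_le_even)
  have "cyc_sign_changes_fun (circ_conv (wrapped_kernel K) f) \<le> enat c'"
    unfolding cyc_sign_changes_fun_le_iff
  proof (intro allI impI)
    fix ts assume "cyclically_ordered ts"
    from cyc_sign_changes_circ_conv_le_Suc[OF nonneg K vd f bound' this]
      even_cyc_sign_changes[of "map (\<lambda>t. circ_conv (wrapped_kernel K) f (cis t)) ts"]
    obtain k where "2 * k \<le> c' + 1" "cyc_sign_changes (map (\<lambda>t. circ_conv (wrapped_kernel K) f (cis t)) ts) = 2 * k"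
      by (metis evenE)
    then show "cyc_sign_changes (map (\<lambda>t. circ_conv (wrapped_kernel K) f (cis t)) ts) \<le> c'"
      unfolding c'_def by presburger
  qed
  also have "enat c' \<le> enat c" by (simp add: c'_def)
  finally show ?thesis .
qed

theorem theorem7:
  fixes K :: "real \<Rightarrow> real"
  assumes "mean_continuous_kernel K"
    and "variation_diminishing_line K"
  shows "\<forall>f. L1_circle f \<longrightarrow>
     cyc_sign_changes_fun (circ_conv (wrapped_kernel K) f) \<le> cyc_sign_changes_fun f"
proof (intro allI impI)
  fix f :: "complex \<Rightarrow> real" assume f: "L1_circle f"
  have nonneg: "\<And>t. K t \<ge> 0" and K: "integrable lborel K"
    using assms(1) unfolding mean_continuous_kernel_def by auto
  show "cyc_sign_changes_fun (circ_conv (wrapped_kernel K) f) \<le> cyc_sign_changes_fun f"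
  proof (cases "cyc_sign_changes_fun f")
    case (enat c)
    then show ?thesis
      using cyc_sign_changes_fun_circ_conv_le[OF nonneg K assms(2) f] by simp
  qed simp
qed

end
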